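(* Let $S$ be a regular ordered semigroup and $\mathcal{B}(S)$ its semigroup of bi-ideals. Let $\mathscr{R}_{\mathcal{B}(S)}$ be the Green's $\mathscr{R}$-relation of the semigroup $(\mathcal{B}(S),* )$ and let $\mathscr{R}'$ be the relation on $\mathcal{B}(S)$ given by: $A\,\mathscr{R}'\,B$ iff for each $a\in A$ there is $b\in B$ with $a\,\mathscr{R}_S\,b$ and for each $b\in B$ there is $a\in A$ with $a\,\mathscr{R}_S\,b$. Then $\mathscr{R}_{\mathcal{B}(S)}\subseteq\mathscr{R}'$.
   Context: An ordered semigroup $(S,\cdot,\leq)$ is a semigroup with a compatible partial order. For $A\subseteq S$, $(A]=\{x\in S: x\leq a\text{ for some }a\in A\}$. $S$ is regular if for each $a\in S$ there is $x\in S$ with $a\leq axa$. A nonempty $A\subseteq S$ is a bi-ideal if $ASA\subseteq A$ and $(A]=A$; $\mathcal{B}(S)$ is the set of bi-ideals with operation $A*B=(AB]$. $a\,\mathscr{R}_S\,b$ iff $(a\cup aS]=(b\cup bS]$. $\mathscr{R}_{\mathcal{B}(S)}$ is the usual Green's $\mathscr{R}$-relation of the semigroup $(\mathcal{B}(S),* )$. *)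

theory Defs
  imports Main
begin

definition ordered_semigroup :: "('a::{semigroup_mult, order}) itself \<Rightarrow> bool" where
  "ordered_semigroup _ \<longleftrightarrow> (\<forall>a b c :: 'a. a \<le> b \<longrightarrow> a * c \<le> b * c \<and> c * a \<le> c * b)"

definition down :: "('a::order) set \<Rightarrow> 'a set" where
  "down A = {x. \<exists>a\<in>A. x \<le> a}"

definition setmul :: "('a::semigroup_mult) set \<Rightarrow> 'a set \<Rightarrow> 'a set" where
  "setmul A B = {a * b | a b. a \<in> A \<and> b \<in> B}"

definition regular_os :: "('a::{semigroup_mult, order}) itself \<Rightarrow> bool" where
  "regular_os _ \<longleftrightarrow> (\<forall>a :: 'a. \<exists>x. a \<le> a * x * a)"

definition bi_ideal :: "('a::{semigroup_mult, order}) set \<Rightarrow> bool" where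
  "bi_ideal A \<longleftrightarrow> A \<noteq> {} \<and> setmul (setmul A UNIV) A \<subseteq> A \<and> down A = A"

definition bi_ideals :: "('a::{semigroup_mult, order}) set set" where
  "bi_ideals = {A. bi_ideal A}"

definition bmul :: "('a::{semigroup_mult, order}) set \<Rightarrow> 'a set \<Rightarrow> 'a set" where
  "bmul A B = down (setmul A B)"

definition greenR_S :: "('a::{semigroup_mult, order}) \<Rightarrow> 'a \<Rightarrow> bool" where
  "greenR_S a b \<longleftrightarrow> down ({a} \<union> setmul {a} UNIV) = down ({b} \<union> setmul {b} UNIV)"

text \<open>Green's R on the semigroup (B(S), *): A B(S)^1 = B B(S)^1.\<close>
definition greenR_B :: "('a::{semigroup_mult, order}) set \<Rightarrow> 'a set \<Rightarrow> bool" where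
  "greenR_B A B \<longleftrightarrow> A \<in> bi_ideals \<and> B \<in> bi_ideals \<and>
     ({A} \<union> {bmul A X | X. X \<in> bi_ideals}) = ({B} \<union> {bmul B X | X. X \<in> bi_ideals})"

definition R' :: "('a::{semigroup_mult, order}) set \<Rightarrow> 'a set \<Rightarrow> bool" where
  "R' A B \<longleftrightarrow> A \<in> bi_ideals \<and> B \<in> bi_ideals \<and>
     (\<forall>a\<in>A. \<exists>b\<in>B. greenR_S a b) \<and> (\<forall>b\<in>B. \<exists>a\<in>A. greenR_S a b)"

end

theory Submission
  imports Defs
begin

text \<open>If \<open>A = (BX]\<close> and \<open>B = (AY]\<close>, every \<open>a \<in> A\<close> satisfies \<open>a \<le> a\<^sub>1 y x\<close> with
  \<open>a\<^sub>1 \<in> A\<close>; regularity \<open>a \<le> a z a\<close> then gives \<open>a \<le> b x\<close> for \<open>b = a z a\<^sub>1 y\<close>, which lies in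
  \<open>B\<close> because \<open>a z a\<^sub>1 \<in> A\<close> by the bi-ideal property. Since also \<open>b \<in> aS\<close>, the elements
  \<open>a\<close> and \<open>b\<close> generate the same principal right ideal.\<close>

definition principal_right_ideal :: "'a::{semigroup_mult, order} \<Rightarrow> 'a set" where
  "principal_right_ideal a = down ({a} \<union> setmul {a} UNIV)"

lemma ordered_semigroup_mult_right_mono:
  "ordered_semigroup TYPE('a::{semigroup_mult, order}) \<Longrightarrow> a \<le> b \<Longrightarrow> a * c \<le> b * (c::'a)"
  unfolding ordered_semigroup_def by blast

lemma ordered_semigroup_mult_left_mono:
  "ordered_semigroup TYPE('a::{semigroup_mult, order}) \<Longrightarrow> a \<le> b \<Longrightarrow> c * a \<le> c * (b::'a)"
  unfolding ordered_semigroup_def by blast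

lemma mem_bmul_iff: "x \<in> bmul A B \<longleftrightarrow> (\<exists>a\<in>A. \<exists>b\<in>B. x \<le> a * b)"
  unfolding bmul_def down_def setmul_def by blast

lemma mem_principal_right_ideal_iff:
  "u \<in> principal_right_ideal a \<longleftrightarrow> u \<le> a \<or> (\<exists>t. u \<le> a * t)"
  unfolding principal_right_ideal_def down_def setmul_def by blast

lemma principal_right_ideal_subset:
  assumes os: "ordered_semigroup TYPE('a::{semigroup_mult, order})"
    and a: "a \<in> principal_right_ideal (b::'a)"
  shows "principal_right_ideal a \<subseteq> principal_right_ideal b"
proof
  fix u assume "u \<in> principal_right_ideal a"
  then consider "u \<le> a" | t where "u \<le> a * t"
    by (auto simp: mem_principal_right_ideal_iff)
  then show "u \<in> principal_right_ideal b"
  proof cases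
    case 1
    with a show ?thesis by (auto simp: mem_principal_right_ideal_iff intro: order_trans)
  next
    case (2 t)
    from a consider "a \<le> b" | s where "a \<le> b * s"
      by (auto simp: mem_principal_right_ideal_iff)
    then show ?thesis
    proof cases
      case 1
      then have "a * t \<le> b * t" by (rule ordered_semigroup_mult_right_mono[OF os])
      with 2 show ?thesis by (auto simp: mem_principal_right_ideal_iff intro: order_trans)
    next
      case (2 s)
      then have "a * t \<le> b * (s * t)"
        using ordered_semigroup_mult_right_mono[OF os] by (metis mult.assoc)
      with \<open>u \<le> a * t\<close> show ?thesis
        by (auto simp: mem_principal_right_ideal_iff intro: order_trans)
    qed
  qed
qed

lemma greenR_S_iff:
  assumes "ordered_semigroup TYPE('a::{semigroup_mult, order})"
  shows "greenR_S a (b::'a) \<longleftrightarrow> a \<in> principal_right_ideal b \<and> b \<in> principal_right_ideal a"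
proof -
  have self: "c \<in> principal_right_ideal c" for c :: 'a
    by (simp add: mem_principal_right_ideal_iff)
  have "greenR_S a b \<longleftrightarrow> principal_right_ideal a = principal_right_ideal b"
    unfolding greenR_S_def principal_right_ideal_def ..
  also have "\<dots> \<longleftrightarrow> a \<in> principal_right_ideal b \<and> b \<in> principal_right_ideal a"
    using self[of a] self[of b] principal_right_ideal_subset[OF assms, of a b]
      principal_right_ideal_subset[OF assms, of b a] by auto
  finally show ?thesis .
qed

lemma greenR_S_refl: "greenR_S a a"
  unfolding greenR_S_def by simp

lemma greenR_S_sym: "greenR_S a b \<Longrightarrow> greenR_S b a"
  unfolding greenR_S_def by simp

lemma bmul_mutual_greenR_S:
  fixes A B X Y :: "'a::{semigroup_mult, order} set"
  assumes os: "ordered_semigroup TYPE('a)" and reg: "regular_os TYPE('a)"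
    and A: "bi_ideal A" "A = bmul B X" and B: "B = bmul A Y"
    and "a \<in> A"
  shows "\<exists>b\<in>B. greenR_S a b"
proof -
  obtain z where z: "a \<le> a * z * a"
    using reg unfolding regular_os_def by blast
  obtain b\<^sub>1 x where "b\<^sub>1 \<in> B" "x \<in> X" and a_le: "a \<le> b\<^sub>1 * x"
    using \<open>a \<in> A\<close> A(2) by (auto simp: mem_bmul_iff)
  then obtain a\<^sub>1 y where "a\<^sub>1 \<in> A" "y \<in> Y" and b\<^sub>1_le: "b\<^sub>1 \<le> a\<^sub>1 * y"
    using B by (auto simp: mem_bmul_iff)
  define b where "b = a * z * a\<^sub>1 * y"
  have "a * z * a\<^sub>1 \<in> A"
    using A(1) \<open>a \<in> A\<close> \<open>a\<^sub>1 \<in> A\<close> unfolding bi_ideal_def setmul_def by blast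
  with \<open>y \<in> Y\<close> have "b \<in> B"
    unfolding b_def B by (auto simp: mem_bmul_iff)
  have "a \<le> a\<^sub>1 * y * x"
    using a_le ordered_semigroup_mult_right_mono[OF os b\<^sub>1_le] by (rule order_trans)
  then have "a * z * a \<le> b * x"
    using ordered_semigroup_mult_left_mono[OF os] unfolding b_def by (simp add: mult.assoc)
  with z have "a \<in> principal_right_ideal b"
    by (auto simp: mem_principal_right_ideal_iff intro: order_trans)
  moreover have "b \<in> principal_right_ideal a"
    unfolding b_def mem_principal_right_ideal_iff by (metis mult.assoc order_refl)
  ultimately show ?thesis
    using \<open>b \<in> B\<close> greenR_S_iff[OF os] by blast
qed

theorem mainTheorem5:
  assumes "ordered_semigroup TYPE('a::{semigroup_mult, order})"
    and "regular_os TYPE('a)"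
  shows "{(A, B). greenR_B A B} \<subseteq> {(A :: 'a set, B). R' A B}"
proof clarify
  fix A B :: "'a set"
  assume "greenR_B A B"
  then have bi: "A \<in> bi_ideals" "B \<in> bi_ideals"
    and eq: "{A} \<union> {bmul A X | X. X \<in> bi_ideals} = {B} \<union> {bmul B X | X. X \<in> bi_ideals}"
    unfolding greenR_B_def by auto
  show "R' A B"
  proof (cases "A = B")
    case True
    with bi show ?thesis unfolding R'_def by (blast intro: greenR_S_refl)
  next
    case False
    with eq have "A \<in> {bmul B X | X. X \<in> bi_ideals}" "B \<in> {bmul A X | X. X \<in> bi_ideals}"
      by blast+
    then obtain X Y where AB: "A = bmul B X" and BA: "B = bmul A Y" by blast
    from bi have "bi_ideal A" "bi_ideal B" unfolding bi_ideals_def by simp_all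
    then have "\<forall>a\<in>A. \<exists>b\<in>B. greenR_S a b" "\<forall>b\<in>B. \<exists>a\<in>A. greenR_S b a"
      using bmul_mutual_greenR_S[OF assms] AB BA by blast+
    with bi show ?thesis unfolding R'_def by (meson greenR_S_sym)
  qed
qed

end
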